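(* Let $\mathbf{C}$ be a category all of whose morphisms are monomorphisms, enriched over $\mathbf{Top}$ with all homsets Hausdorff, and let $\mathbf{D}$ be a full subcategory of $\mathbf{C}$ which is a skeletal category of finite objects. Let $S \in \mathrm{Ob}(\mathbf{C})$ be universal for $\mathbf{D}$, and for each $B \in \mathrm{Ob}(\mathbf{D})$ fix a morphism $\iota_B \in \hom(B,S)$. Assume that $T_\mathbf{C}(A,S) < \infty$ for all $A \in \mathrm{Ob}(\mathbf{D})$ and that $S$ is approximable in $\mathbf{D}$ via $F : \mathrm{Ob}(\mathbf{D}) \to \mathrm{Ob}(\mathbf{D})$ and $(\Phi_A)_{A\in\mathrm{Ob}(\mathbf{D})}$. Then for every $A \in \mathrm{Ob}(\mathbf{D})$ there is an $n \in \mathbb{N}$ such that for every $k \in \mathbb{N}$ and every coloring $\chi : \bigcup_{B\in\mathrm{Ob}(\mathbf{D})} \hom(A,B) \to k$ there is $h \in \hom(S,S)$ satisfying $$\Big|\chi\Big(\bigcup_{B \in \mathrm{Ob}(\mathbf{D})} h \star \hom(A,B)\Big)\Big| \le n,$$ where for $h \in \hom(S,S)$ and $f \in \hom(A,B)$ with $A,B\in\mathrm{Ob}(\mathbf{D})$ we set $h \star f = \Phi_B(h\cdot\iota_{F(B)})\cdot f$.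
   Context: A category is enriched over $\mathbf{Top}$ if each homset is a topological space and composition is continuous. Skeletal: no two distinct objects are isomorphic. A category of finite objects is a locally small directed category whose morphisms are monomorphisms, whose skeleton has at most countably many objects, and in whose skeleton every object is the codomain of only finitely many morphisms. $S$ is universal for $\mathbf{D}$ if $\hom_\mathbf{C}(D,S)\neq\varnothing$ for every $D\in\mathrm{Ob}(\mathbf{D})$. $S$ is approximable in $\mathbf{D}$ via $F$ and $(\Phi_A)$ if each $\Phi_A:\hom_\mathbf{C}(F(A),S)\to\bigcup_{C\in\mathrm{Ob}(\mathbf{D})}\hom_\mathbf{D}(A,C)$ is Borel (preimages of open subsets of each $\hom_\mathbf{D}(A,C)$ are Borel) and for all $A,B\in\mathrm{Ob}(\mathbf{D})$, $f\in\hom_\mathbf{D}(A,B)$, $u\in\hom_\mathbf{C}(F(B),S)$ there is $f'\in\hom_\mathbf{D}(F(A),F(B))$ with $\Phi_A(u\cdot f')=\Phi_B(u)\cdot f$. $T_\mathbf{C}(X,S)$ (big embedding Ramsey degree) is the least positive integer $n$ such that for every $k\ge2$ and every Borel coloring $\chi:\hom_\mathbf{C}(X,S)\to\{0,\dots,k-1\}$ (all fibers Borel) there is $w\in\hom(S,S)$ with $|\chi(w\cdot\hom(X,S))|\le n$; $\infty$ if none. $h\star\hom(A,B)=\{h\star f: f\in\hom(A,B)\}$. *)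

theory Defs
  imports "HOL-Analysis.Analysis"
begin

text \<open>A (concrete) category: object set Ob, homsets hom A B, composition
  cmp g f (= g \<cdot> f, first f then g), identities ide.  Homsets of distinct
  pairs of objects are disjoint (each morphism has a unique domain/codomain).\<close>
definition category ::
  "'o set \<Rightarrow> ('o \<Rightarrow> 'o \<Rightarrow> 'm set) \<Rightarrow> ('m \<Rightarrow> 'm \<Rightarrow> 'm) \<Rightarrow> ('o \<Rightarrow> 'm) \<Rightarrow> bool" where
  "category Ob hom cmp ide \<longleftrightarrow>
     (\<forall>A\<in>Ob. ide A \<in> hom A A) \<and>
     (\<forall>A\<in>Ob. \<forall>B\<in>Ob. \<forall>C\<in>Ob. \<forall>f\<in>hom A B. \<forall>g\<in>hom B C. cmp g f \<in> hom A C) \<and>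
     (\<forall>A\<in>Ob. \<forall>B\<in>Ob. \<forall>C\<in>Ob. \<forall>D\<in>Ob. \<forall>f\<in>hom A B. \<forall>g\<in>hom B C. \<forall>h\<in>hom C D.
        cmp h (cmp g f) = cmp (cmp h g) f) \<and>
     (\<forall>A\<in>Ob. \<forall>B\<in>Ob. \<forall>f\<in>hom A B. cmp f (ide A) = f \<and> cmp (ide B) f = f) \<and>
     (\<forall>A\<in>Ob. \<forall>B\<in>Ob. \<forall>A'\<in>Ob. \<forall>B'\<in>Ob. (A, B) \<noteq> (A', B') \<longrightarrow> hom A B \<inter> hom A' B' = {})"

definition all_mono ::
  "'o set \<Rightarrow> ('o \<Rightarrow> 'o \<Rightarrow> 'm set) \<Rightarrow> ('m \<Rightarrow> 'm \<Rightarrow> 'm) \<Rightarrow> bool" where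
  "all_mono Ob hom cmp \<longleftrightarrow>
     (\<forall>A\<in>Ob. \<forall>B\<in>Ob. \<forall>C\<in>Ob. \<forall>f\<in>hom B C. \<forall>g\<in>hom A B. \<forall>h\<in>hom A B.
        cmp f g = cmp f h \<longrightarrow> g = h)"

definition top_enriched ::
  "'o set \<Rightarrow> ('o \<Rightarrow> 'o \<Rightarrow> 'm set) \<Rightarrow> ('m \<Rightarrow> 'm \<Rightarrow> 'm) \<Rightarrow> ('o \<Rightarrow> 'o \<Rightarrow> 'm topology) \<Rightarrow> bool" where
  "top_enriched Ob hom cmp T \<longleftrightarrow>
     (\<forall>A\<in>Ob. \<forall>B\<in>Ob. topspace (T A B) = hom A B) \<and>
     (\<forall>A\<in>Ob. \<forall>B\<in>Ob. \<forall>C\<in>Ob.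
        continuous_map (prod_topology (T B C) (T A B)) (T A C) (\<lambda>(g, f). cmp g f))"

definition borel_sets :: "'a topology \<Rightarrow> 'a set set" where
  "borel_sets X = sigma_sets (topspace X) {U. openin X U}"

definition isomorphic ::
  "('o \<Rightarrow> 'o \<Rightarrow> 'm set) \<Rightarrow> ('m \<Rightarrow> 'm \<Rightarrow> 'm) \<Rightarrow> ('o \<Rightarrow> 'm) \<Rightarrow> 'o \<Rightarrow> 'o \<Rightarrow> bool" where
  "isomorphic hom cmp ide A B \<longleftrightarrow>
     (\<exists>f\<in>hom A B. \<exists>g\<in>hom B A. cmp g f = ide A \<and> cmp f g = ide B)"

definition skeletal ::
  "'o set \<Rightarrow> ('o \<Rightarrow> 'o \<Rightarrow> 'm set) \<Rightarrow> ('m \<Rightarrow> 'm \<Rightarrow> 'm) \<Rightarrow> ('o \<Rightarrow> 'm) \<Rightarrow> bool" where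
  "skeletal Ob hom cmp ide \<longleftrightarrow>
     (\<forall>A\<in>Ob. \<forall>B\<in>Ob. isomorphic hom cmp ide A B \<longrightarrow> A = B)"

definition directed :: "'o set \<Rightarrow> ('o \<Rightarrow> 'o \<Rightarrow> 'm set) \<Rightarrow> bool" where
  "directed Ob hom \<longleftrightarrow>
     (\<forall>A\<in>Ob. \<forall>B\<in>Ob. \<exists>C\<in>Ob. hom A C \<noteq> {} \<and> hom B C \<noteq> {})"

text \<open>A skeletal category of finite objects (the skeleton is the category
  itself): directed, all morphisms mono, countably many objects, and every
  object is the codomain of only finitely many morphisms.  Local smallness is
  automatic (homsets are sets).\<close>
definition skeletal_cat_finite_objects ::
  "'o set \<Rightarrow> ('o \<Rightarrow> 'o \<Rightarrow> 'm set) \<Rightarrow> ('m \<Rightarrow> 'm \<Rightarrow> 'm) \<Rightarrow> ('o \<Rightarrow> 'm) \<Rightarrow> bool" where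
  "skeletal_cat_finite_objects Ob hom cmp ide \<longleftrightarrow>
     category Ob hom cmp ide \<and> skeletal Ob hom cmp ide \<and> directed Ob hom \<and>
     all_mono Ob hom cmp \<and> countable Ob \<and>
     (\<forall>B\<in>Ob. finite (\<Union>A\<in>Ob. hom A B))"

definition universal_for :: "'o set \<Rightarrow> ('o \<Rightarrow> 'o \<Rightarrow> 'm set) \<Rightarrow> 'o \<Rightarrow> bool" where
  "universal_for ObD hom S \<longleftrightarrow> (\<forall>D\<in>ObD. hom D S \<noteq> {})"

definition approximable ::
  "'o set \<Rightarrow> ('o \<Rightarrow> 'o \<Rightarrow> 'm set) \<Rightarrow> ('m \<Rightarrow> 'm \<Rightarrow> 'm) \<Rightarrow> ('o \<Rightarrow> 'o \<Rightarrow> 'm topology)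
    \<Rightarrow> 'o \<Rightarrow> ('o \<Rightarrow> 'o) \<Rightarrow> ('o \<Rightarrow> 'm \<Rightarrow> 'm) \<Rightarrow> bool" where
  "approximable ObD hom cmp T S F Phi \<longleftrightarrow>
     (\<forall>A\<in>ObD. F A \<in> ObD) \<and>
     (\<forall>A\<in>ObD. \<forall>u\<in>hom (F A) S. Phi A u \<in> (\<Union>C\<in>ObD. hom A C)) \<and>
     (\<forall>A\<in>ObD. \<forall>C\<in>ObD. \<forall>U. openin (T A C) U \<longrightarrow>
        {u \<in> hom (F A) S. Phi A u \<in> U} \<in> borel_sets (T (F A) S)) \<and>
     (\<forall>A\<in>ObD. \<forall>B\<in>ObD. \<forall>f\<in>hom A B. \<forall>u\<in>hom (F B) S.
        \<exists>f'\<in>hom (F A) (F B). Phi A (cmp u f') = cmp (Phi B u) f)"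

definition finite_big_ramsey_degree ::
  "('o \<Rightarrow> 'o \<Rightarrow> 'm set) \<Rightarrow> ('m \<Rightarrow> 'm \<Rightarrow> 'm) \<Rightarrow> ('o \<Rightarrow> 'o \<Rightarrow> 'm topology) \<Rightarrow> 'o \<Rightarrow> 'o \<Rightarrow> bool" where
  "finite_big_ramsey_degree hom cmp T X S \<longleftrightarrow>
     (\<exists>n::nat. n > 0 \<and>
        (\<forall>k::nat. k \<ge> 2 \<longrightarrow>
          (\<forall>(col::'m \<Rightarrow> nat). 
             (\<forall>f\<in>hom X S. col f < k) \<longrightarrow>
             (\<forall>i<k. {f \<in> hom X S. col f = i} \<in> borel_sets (T X S)) \<longrightarrow>
             (\<exists>w\<in>hom S S. card (col ` ((\<lambda>f. cmp w f) ` hom X S)) \<le> n))))"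

end

theory Submission
  imports Defs
begin

text \<open>Pull a colouring \<open>\<chi>\<close> of the finite homsets \<open>hom(A, -)\<close> of \<open>D\<close> back along \<open>\<Phi>\<^sub>A\<close> to the
  colouring \<open>\<chi> \<circ> \<Phi>\<^sub>A\<close> of \<open>hom(F(A), S)\<close>. Finite Hausdorff homsets are discrete and \<open>D\<close> has
  countably many objects, so the pulled-back colouring is Borel, and the finite big Ramsey
  degree of \<open>F(A)\<close> yields \<open>w \<in> hom(S, S)\<close> on which it takes at most \<open>n\<close> colours. By
  approximability every \<open>w \<star> f\<close> with \<open>f \<in> hom(A, B)\<close> equals \<open>\<Phi>\<^sub>A(w \<cdot> \<iota>\<^bsub>F(B)\<^esub> \<cdot> f')\<close> for some
  \<open>f' \<in> hom(F(A), F(B))\<close>, so its colour is one of those \<open>n\<close> colours.\<close>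

lemma category_comp_in_hom:
  assumes "category Ob hom cmp ide" "A \<in> Ob" "B \<in> Ob" "C \<in> Ob" "f \<in> hom A B" "g \<in> hom B C"
  shows "cmp g f \<in> hom A C"
  using assms unfolding category_def by (elim conjE) simp

lemma category_comp_assoc:
  assumes "category Ob hom cmp ide" "A \<in> Ob" "B \<in> Ob" "C \<in> Ob" "D \<in> Ob"
    "f \<in> hom A B" "g \<in> hom B C" "h \<in> hom C D"
  shows "cmp h (cmp g f) = cmp (cmp h g) f"
  using assms unfolding category_def by (elim conjE) simp

lemma approximableD:
  assumes "approximable ObD hom cmp T S F Phi" "A \<in> ObD"
  shows approximable_F_closed: "F A \<in> ObD"
    and approximable_Phi_in_hom: "u \<in> hom (F A) S \<Longrightarrow> Phi A u \<in> (\<Union>C\<in>ObD. hom A C)"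
    and approximable_Phi_borel: "\<lbrakk>C \<in> ObD; openin (T A C) U\<rbrakk> \<Longrightarrow>
          {u \<in> hom (F A) S. Phi A u \<in> U} \<in> borel_sets (T (F A) S)"
    and approximable_lift: "\<lbrakk>B \<in> ObD; f \<in> hom A B; u \<in> hom (F B) S\<rbrakk> \<Longrightarrow>
          \<exists>f'\<in>hom (F A) (F B). Phi A (cmp u f') = cmp (Phi B u) f"
  using assms unfolding approximable_def by (elim conjE; simp)+

lemma sigma_algebra_borel_sets: "sigma_algebra (topspace X) (borel_sets X)"
  unfolding borel_sets_def by (rule sigma_algebra_sigma_sets) (auto dest: openin_subset)

lemma approximable_pullback_fibre_borel:
  assumes approx: "approximable ObD hom cmp T S F Phi" and A: "A \<in> ObD"
    and countable: "countable ObD"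
    and discrete: "\<And>C. C \<in> ObD \<Longrightarrow>
      finite (hom A C) \<and> Hausdorff_space (T A C) \<and> topspace (T A C) = hom A C"
  shows "{u \<in> hom (F A) S. col (Phi A u) = i} \<in> borel_sets (T (F A) S)"
proof -
  have fibre_UN: "{u \<in> hom (F A) S. col (Phi A u) = i} =
      (\<Union>C\<in>ObD. {u \<in> hom (F A) S. Phi A u \<in> {f \<in> hom A C. col f = i}})"
    using approximable_Phi_in_hom[OF approx A] by blast
  have "{u \<in> hom (F A) S. Phi A u \<in> {f \<in> hom A C. col f = i}} \<in> borel_sets (T (F A) S)"
    if C: "C \<in> ObD" for C
  proof -
    have "T A C = discrete_topology (hom A C)"
      using discrete[OF C] by (blast intro: finite_topspace_imp_discrete_topology)
    then have "openin (T A C) {f \<in> hom A C. col f = i}" by auto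
    then show ?thesis by (rule approximable_Phi_borel[OF approx A C])
  qed
  then show ?thesis
    unfolding fibre_UN by (rule sigma_algebra.countable_UN''[OF sigma_algebra_borel_sets countable])
qed

lemma finite_big_ramsey_degreeE:
  assumes "finite_big_ramsey_degree hom cmp T X S"
  obtains n where "\<And>k col. \<lbrakk>\<forall>f\<in>hom X S. col f < (k::nat);
      \<forall>i. {f \<in> hom X S. col f = i} \<in> borel_sets (T X S)\<rbrakk> \<Longrightarrow>
      \<exists>w\<in>hom S S. card (col ` cmp w ` hom X S) \<le> n"
proof -
  obtain n where n: "\<forall>k::nat. k \<ge> 2 \<longrightarrow> (\<forall>col::'b \<Rightarrow> nat. (\<forall>f\<in>hom X S. col f < k) \<longrightarrow>
      (\<forall>i<k. {f \<in> hom X S. col f = i} \<in> borel_sets (T X S)) \<longrightarrow>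
      (\<exists>w\<in>hom S S. card (col ` cmp w ` hom X S) \<le> n))"
    using assms unfolding finite_big_ramsey_degree_def by blast
  show thesis
  proof (rule that)
    fix k and col :: "'b \<Rightarrow> nat"
    assume "\<forall>f\<in>hom X S. col f < k" "\<forall>i. {f \<in> hom X S. col f = i} \<in> borel_sets (T X S)"
    then show "\<exists>w\<in>hom S S. card (col ` cmp w ` hom X S) \<le> n"
      using n[rule_format, of "max k 2" col] by fastforce
  qed
qed

lemma approximable_star_subset_Phi_image:
  assumes cat: "category ObC hom cmp ide" and sub: "ObD \<subseteq> ObC" and S: "S \<in> ObC"
    and iota: "\<forall>B\<in>ObD. \<iota> B \<in> hom B S"
    and approx: "approximable ObD hom cmp T S F Phi"
    and A: "A \<in> ObD" and w: "w \<in> hom S S"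
  shows "(\<Union>B\<in>ObD. (\<lambda>f. cmp (Phi B (cmp w (\<iota> (F B)))) f) ` hom A B)
           \<subseteq> Phi A ` cmp w ` hom (F A) S"
proof clarify
  fix B f assume B: "B \<in> ObD" and f: "f \<in> hom A B"
  have FA: "F A \<in> ObC" and FB: "F B \<in> ObC" "F B \<in> ObD"
    using approximable_F_closed[OF approx] A B sub by auto
  have iota_FB: "\<iota> (F B) \<in> hom (F B) S" using iota FB by blast
  have "cmp w (\<iota> (F B)) \<in> hom (F B) S"
    using category_comp_in_hom[OF cat FB(1) S S iota_FB w] .
  then obtain f' where f': "f' \<in> hom (F A) (F B)"
    and lift: "Phi A (cmp (cmp w (\<iota> (F B))) f') = cmp (Phi B (cmp w (\<iota> (F B)))) f"
    using approximable_lift[OF approx A B f] by blast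
  have "cmp (Phi B (cmp w (\<iota> (F B)))) f = Phi A (cmp w (cmp (\<iota> (F B)) f'))"
    using lift category_comp_assoc[OF cat FA FB(1) S S f' iota_FB w] by simp
  moreover have "cmp (\<iota> (F B)) f' \<in> hom (F A) S"
    using category_comp_in_hom[OF cat FA FB(1) S f' iota_FB] .
  ultimately show "cmp (Phi B (cmp w (\<iota> (F B)))) f \<in> Phi A ` cmp w ` hom (F A) S"
    by blast
qed

lemma approximable_star_colours_bounded:
  assumes cat: "category ObC hom cmp ide" and sub: "ObD \<subseteq> ObC" and S: "S \<in> ObC"
    and iota: "\<forall>B\<in>ObD. \<iota> B \<in> hom B S"
    and approx: "approximable ObD hom cmp T S F Phi"
    and A: "A \<in> ObD" and countable: "countable ObD"
    and discrete: "\<And>C. C \<in> ObD \<Longrightarrow>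
      finite (hom A C) \<and> Hausdorff_space (T A C) \<and> topspace (T A C) = hom A C"
    and ramsey: "finite_big_ramsey_degree hom cmp T (F A) S"
  shows "\<exists>n::nat. \<forall>(k::nat) (col::'m \<Rightarrow> nat). (\<forall>f\<in>(\<Union>B\<in>ObD. hom A B). col f < k) \<longrightarrow>
    (\<exists>h\<in>hom S S. card (col ` (\<Union>B\<in>ObD. (\<lambda>f. cmp (Phi B (cmp h (\<iota> (F B)))) f) ` hom A B)) \<le> n)"
proof -
  obtain n where n: "\<And>k col. \<lbrakk>\<forall>f\<in>hom (F A) S. col f < (k::nat);
      \<forall>i. {f \<in> hom (F A) S. col f = i} \<in> borel_sets (T (F A) S)\<rbrakk> \<Longrightarrow>
      \<exists>w\<in>hom S S. card (col ` cmp w ` hom (F A) S) \<le> n"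
    using ramsey by (rule finite_big_ramsey_degreeE) blast
  have FA: "F A \<in> ObC" using approximable_F_closed[OF approx A] sub by blast
  show ?thesis
  proof (intro exI allI impI)
    fix k and col :: "'m \<Rightarrow> nat"
    assume col: "\<forall>f\<in>(\<Union>B\<in>ObD. hom A B). col f < k"
    have pullback_bounded: "\<forall>u\<in>hom (F A) S. (col \<circ> Phi A) u < k"
      using col approximable_Phi_in_hom[OF approx A] by fastforce
    have pullback_borel: "\<forall>i. {u \<in> hom (F A) S. (col \<circ> Phi A) u = i} \<in> borel_sets (T (F A) S)"
      by (simp add: approximable_pullback_fibre_borel[OF approx A countable discrete])
    obtain w where w: "w \<in> hom S S"
      and card_w: "card ((col \<circ> Phi A) ` cmp w ` hom (F A) S) \<le> n"
      using n[OF pullback_bounded pullback_borel] by blast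
    have "cmp w ` hom (F A) S \<subseteq> hom (F A) S"
      using category_comp_in_hom[OF cat FA S S _ w] by blast
    then have "(col \<circ> Phi A) ` cmp w ` hom (F A) S \<subseteq> {..<k}"
      using pullback_bounded by auto
    then have "finite ((col \<circ> Phi A) ` cmp w ` hom (F A) S)"
      by (rule finite_subset) simp
    moreover have "col ` (\<Union>B\<in>ObD. (\<lambda>f. cmp (Phi B (cmp w (\<iota> (F B)))) f) ` hom A B)
        \<subseteq> (col \<circ> Phi A) ` cmp w ` hom (F A) S"
      using image_mono[OF approximable_star_subset_Phi_image[OF cat sub S iota approx A w], of col]
      by (simp add: image_comp)
    ultimately have "card (col ` (\<Union>B\<in>ObD. (\<lambda>f. cmp (Phi B (cmp w (\<iota> (F B)))) f) ` hom A B))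
        \<le> n"
      using card_w by (meson card_mono order_trans)
    with w show "\<exists>h\<in>hom S S.
        card (col ` (\<Union>B\<in>ObD. (\<lambda>f. cmp (Phi B (cmp h (\<iota> (F B)))) f) ` hom A B)) \<le> n" ..
  qed
qed

theorem theorem6p3:
  fixes ObC :: "'o set" and hom :: "'o \<Rightarrow> 'o \<Rightarrow> 'm set"
    and cmp :: "'m \<Rightarrow> 'm \<Rightarrow> 'm" and ide :: "'o \<Rightarrow> 'm"
    and T :: "'o \<Rightarrow> 'o \<Rightarrow> 'm topology"
    and ObD :: "'o set" and S :: "'o" and \<iota> :: "'o \<Rightarrow> 'm"
    and F :: "'o \<Rightarrow> 'o" and Phi :: "'o \<Rightarrow> 'm \<Rightarrow> 'm"
  assumes cat: "category ObC hom cmp ide"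
    and mono: "all_mono ObC hom cmp"
    and enr: "top_enriched ObC hom cmp T"
    and haus: "\<forall>A\<in>ObC. \<forall>B\<in>ObC. Hausdorff_space (T A B)"
    and sub: "ObD \<subseteq> ObC"
    and Dfin: "skeletal_cat_finite_objects ObD hom cmp ide"
    and S: "S \<in> ObC"
    and univ: "universal_for ObD hom S"
    and iota: "\<forall>B\<in>ObD. \<iota> B \<in> hom B S"
    and ramsey: "\<forall>A\<in>ObD. finite_big_ramsey_degree hom cmp T A S"
    and approx: "approximable ObD hom cmp T S F Phi"
  shows "\<forall>A\<in>ObD. \<exists>n::nat. \<forall>k::nat. \<forall>(col::'m \<Rightarrow> nat).
           (\<forall>f\<in>(\<Union>B\<in>ObD. hom A B). col f < k) \<longrightarrow>
           (\<exists>h\<in>hom S S.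
              card (col ` (\<Union>B\<in>ObD. (\<lambda>f. cmp (Phi B (cmp h (\<iota> (F B)))) f) ` hom A B)) \<le> n)"
proof
  fix A assume A: "A \<in> ObD"
  have countable: "countable ObD"
    using Dfin unfolding skeletal_cat_finite_objects_def by simp
  have discrete: "finite (hom A C) \<and> Hausdorff_space (T A C) \<and> topspace (T A C) = hom A C"
    if C: "C \<in> ObD" for C
  proof (intro conjI)
    show "finite (hom A C)"
      using Dfin A C unfolding skeletal_cat_finite_objects_def by (meson UN_upper finite_subset)
    have "A \<in> ObC" "C \<in> ObC" using A C sub by auto
    then show "Hausdorff_space (T A C)" "topspace (T A C) = hom A C"
      using haus enr unfolding top_enriched_def by simp_all
  qed
  have ramsey_FA: "finite_big_ramsey_degree hom cmp T (F A) S"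
    using ramsey approximable_F_closed[OF approx A] ..
  from discrete ramsey_FA show "\<exists>n::nat. \<forall>k::nat. \<forall>col::'m \<Rightarrow> nat.
      (\<forall>f\<in>(\<Union>B\<in>ObD. hom A B). col f < k) \<longrightarrow>
      (\<exists>h\<in>hom S S. card (col ` (\<Union>B\<in>ObD. (\<lambda>f. cmp (Phi B (cmp h (\<iota> (F B)))) f) ` hom A B)) \<le> n)"
    by (rule approximable_star_colours_bounded[OF cat sub S iota approx A countable])
qed

end
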